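(* For every backward trie $\mathsf{T}_b$ with $n\ge 3$ nodes, the suffix tree $\mathsf{STree}(\mathsf{T}_b)$ has at most $2n-3$ nodes and at most $2n-4$ edges, independently of the alphabet size.
   Context: An alphabet $\Sigma$ is a finite ordered set of characters. A forward trie $\mathsf{T}_f$ is a rooted tree with $n$ nodes in which every edge is directed from parent to child and labeled by a single character of $\Sigma$, such that the edges leaving any node carry pairwise distinct labels. The backward trie $\mathsf{T}_b$ is obtained from $\mathsf{T}_f$ by reversing the direction of every edge while keeping its label; it has the same $n$ nodes and the same root $r$. For nodes $u,v$ with $u$ an ancestor of $v$ (possibly $u=v$), $\mathrm{str}_b(v,u)$ is the string of labels read along the reversed (upward) path from $v$ to $u$. Define $\mathrm{Suffix}(\mathsf{T}_b)=\{\mathrm{str}_b(v,r): v \text{ a node}\}$. For a finite set $S$ of strings, its compact tree is obtained from the trie of all prefixes of strings in $S$ (one node per prefix, the root being the empty string, an edge labeled $a$ from $X$ to $Xa$) by deleting every non-root node that has exactly one child and merging its two incident edges into one edge labeled by the concatenation of their labels. The suffix tree $\mathsf{STree}(\mathsf{T}_b)$ is the compact tree of $\mathrm{Suffix}(\mathsf{T}_b)$. *)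

theory Defs
  imports "HOL-Library.Sublist"
begin

text \<open>A (forward) trie with node set V, root r, parent map par and edge labels:
  for a non-root node v, the edge par v -> v carries label lab v.
  The backward trie has the same nodes and the reversed edges v -> par v with the same labels.\<close>

definition is_trie :: "'v set \<Rightarrow> 'v \<Rightarrow> ('v \<Rightarrow> 'v) \<Rightarrow> ('v \<Rightarrow> 'c) \<Rightarrow> bool" where
  "is_trie V r par lab \<longleftrightarrow>
     finite V \<and> r \<in> V \<and>
     (\<forall>v \<in> V - {r}. par v \<in> V) \<and>
     (\<forall>v \<in> V. \<exists>k. (par ^^ k) v = r) \<and>
     (\<forall>v \<in> V - {r}. \<forall>w \<in> V - {r}. v \<noteq> w \<and> par v = par w \<longrightarrow> lab v \<noteq> lab w)"

definition depth :: "'v \<Rightarrow> ('v \<Rightarrow> 'v) \<Rightarrow> 'v \<Rightarrow> nat" where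
  "depth r par v = (LEAST k. (par ^^ k) v = r)"

definition str_b :: "'v \<Rightarrow> ('v \<Rightarrow> 'v) \<Rightarrow> ('v \<Rightarrow> 'c) \<Rightarrow> 'v \<Rightarrow> 'c list" where
  "str_b r par lab v = map (\<lambda>i. lab ((par ^^ i) v)) [0..<depth r par v]"

definition Suffix_b :: "'v set \<Rightarrow> 'v \<Rightarrow> ('v \<Rightarrow> 'v) \<Rightarrow> ('v \<Rightarrow> 'c) \<Rightarrow> 'c list set" where
  "Suffix_b V r par lab = str_b r par lab ` V"

text \<open>Compact tree of a set of strings S: nodes of the trie of all prefixes of S,
  minus the non-root nodes with exactly one child; edges join a kept node to its
  nearest kept proper descendant (merged unary paths).\<close>

definition prefixes_of :: "'c list set \<Rightarrow> 'c list set" where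
  "prefixes_of S = {x. \<exists>s \<in> S. prefix x s}"

definition children_of :: "'c list set \<Rightarrow> 'c list \<Rightarrow> 'c list set" where
  "children_of S x = {y \<in> prefixes_of S. \<exists>a. y = x @ [a]}"

definition ctree_nodes :: "'c list set \<Rightarrow> 'c list set" where
  "ctree_nodes S = {x \<in> prefixes_of S. x = [] \<or> card (children_of S x) \<noteq> 1}"

definition ctree_edges :: "'c list set \<Rightarrow> ('c list \<times> 'c list) set" where
  "ctree_edges S = {(x, y). x \<in> ctree_nodes S \<and> y \<in> ctree_nodes S \<and> strict_prefix x y \<and>
      \<not> (\<exists>z \<in> ctree_nodes S. strict_prefix x z \<and> strict_prefix z y)}"

end

theory Submission
  imports Defs
begin

text \<open>In the trie of all prefixes of a finite set S every leaf lies in S, and a finite rooted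
  tree has fewer branching nodes than leaves. The compact tree keeps only the root, the leaves and
  the branching nodes, so with L leaves it has at most 2L nodes, and at most 2L - 1 if the root
  branches. For a suffix set, [] \<in> S is not a leaf, so L \<le> |S| - 1; if the root does not
  branch, its only child is the one-letter suffix [a] \<in> S, which is either a leaf (and then the
  trie is a single edge) or a further non-leaf element of S, so L \<le> |S| - 2. An edge of the
  compact tree is determined by its lower end, hence there is one edge fewer than nodes.\<close>

definition leaves_of :: "'c list set \<Rightarrow> 'c list set" where
  "leaves_of S = {x \<in> prefixes_of S. children_of S x = {}}"

definition branching_of :: "'c list set \<Rightarrow> 'c list set" where
  "branching_of S = {x \<in> prefixes_of S. 2 \<le> card (children_of S x)}"

lemma finite_prefixes_of: "finite S \<Longrightarrow> finite (prefixes_of S)"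
proof -
  assume "finite S"
  moreover have "prefixes_of S \<subseteq> (\<Union>s\<in>S. set (prefixes s))"
    unfolding prefixes_of_def by auto
  ultimately show ?thesis by (meson finite_UN_I finite_set finite_subset)
qed

lemma prefixes_of_prefix_closed: "y \<in> prefixes_of S \<Longrightarrow> prefix x y \<Longrightarrow> x \<in> prefixes_of S"
  unfolding prefixes_of_def using prefix_order.trans by blast

lemma subset_prefixes_of: "S \<subseteq> prefixes_of S"
  unfolding prefixes_of_def by auto

lemma children_of_subset: "children_of S x \<subseteq> prefixes_of S"
  unfolding children_of_def by auto

lemma finite_children_of: "finite S \<Longrightarrow> finite (children_of S x)"
  by (rule finite_subset[OF children_of_subset finite_prefixes_of])

lemma Nil_in_prefixes_of: "S \<noteq> {} \<Longrightarrow> [] \<in> prefixes_of S"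
  unfolding prefixes_of_def by auto

lemma prefixes_of_minus_Nil:
  "prefixes_of S - {[]} = (\<Union>x\<in>prefixes_of S. children_of S x)"
proof
  show "prefixes_of S - {[]} \<subseteq> (\<Union>x\<in>prefixes_of S. children_of S x)"
  proof
    fix y assume y: "y \<in> prefixes_of S - {[]}"
    then have y_snoc: "y = butlast y @ [last y]" by simp
    then have "butlast y \<in> prefixes_of S"
      using y prefixes_of_prefix_closed by (metis DiffD1 prefixI)
    moreover have "y \<in> children_of S (butlast y)"
      using y y_snoc unfolding children_of_def by blast
    ultimately show "y \<in> (\<Union>x\<in>prefixes_of S. children_of S x)" by blast
  qed
qed (auto simp: children_of_def)

text \<open>Every non-root node is the child of exactly one node.\<close>
lemma sum_card_children_of:
  assumes "finite S" "S \<noteq> {}"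
  shows "(\<Sum>x\<in>prefixes_of S. card (children_of S x)) = card (prefixes_of S) - 1"
proof -
  have "(\<Sum>x\<in>prefixes_of S. card (children_of S x)) = card (prefixes_of S - {[]})"
    unfolding prefixes_of_minus_Nil
    by (rule card_UN_disjoint[symmetric])
       (auto simp: finite_prefixes_of finite_children_of assms(1) children_of_def)
  also have "\<dots> = card (prefixes_of S) - 1"
    using Nil_in_prefixes_of[OF assms(2)] by simp
  finally show ?thesis .
qed

lemma card_branching_of_less_leaves_of:
  assumes fin: "finite S" and ne: "S \<noteq> {}"
  shows "card (branching_of S) < card (leaves_of S)"
proof -
  define P where "P = prefixes_of S"
  define c where "c x = card (children_of S x)" for x
  define U where "U = {x \<in> P. c x = 1}"
  have finP: "finite P" using finite_prefixes_of[OF fin] by (simp add: P_def)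
  have "P \<noteq> {}" using Nil_in_prefixes_of[OF ne] by (auto simp: P_def)
  then have P_pos: "card P \<noteq> 0" using finP by simp
  have L: "leaves_of S = {x \<in> P. c x = 0}"
    using finite_children_of[OF fin] by (auto simp: leaves_of_def P_def c_def)
  have B: "branching_of S = {x \<in> P. 2 \<le> c x}"
    by (simp add: branching_of_def P_def c_def)
  have P_split: "P = leaves_of S \<union> U \<union> branching_of S"
    unfolding L B U_def by auto
  have fin_parts: "finite (leaves_of S)" "finite U" "finite (branching_of S)"
    using finP unfolding L B U_def by auto
  have disj: "leaves_of S \<inter> U = {}" "(leaves_of S \<union> U) \<inter> branching_of S = {}"
    unfolding L B U_def by auto
  have "card U + 2 * card (branching_of S) \<le> (\<Sum>x\<in>U. c x) + (\<Sum>x\<in>branching_of S. c x)"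
    using sum_mono[of "branching_of S" "\<lambda>_. 2::nat" c] by (simp add: U_def B)
  also have "\<dots> = (\<Sum>x\<in>P. c x)"
    unfolding P_split using fin_parts disj by (simp add: sum.union_disjoint L)
  also have "\<dots> = card P - 1"
    using sum_card_children_of[OF fin ne] by (simp add: P_def c_def)
  finally have "card U + 2 * card (branching_of S) \<le> card P - 1" .
  moreover have "card P = card (leaves_of S) + card U + card (branching_of S)"
    unfolding P_split using fin_parts disj by (simp add: card_Un_disjoint)
  ultimately show ?thesis using P_pos by linarith
qed

lemma leaves_of_subset: "leaves_of S \<subseteq> S"
proof
  fix x assume x: "x \<in> leaves_of S"
  then obtain s where s: "s \<in> S" "prefix x s"
    unfolding leaves_of_def prefixes_of_def by auto
  show "x \<in> S"
  proof (rule ccontr)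
    assume "x \<notin> S"
    then obtain t where t: "s = x @ t" "t \<noteq> []" using s by (metis append.right_neutral prefixE)
    then have "prefix (x @ [hd t]) s" by (metis append.assoc append_Cons append_Nil hd_Cons_tl prefixI)
    then have "x @ [hd t] \<in> children_of S x"
      using s unfolding children_of_def prefixes_of_def by auto
    then show False using x by (simp add: leaves_of_def)
  qed
qed

lemma ctree_nodes_subset:
  "finite S \<Longrightarrow> ctree_nodes S \<subseteq> insert [] (leaves_of S \<union> branching_of S)"
proof
  fix x assume fin: "finite S" and x: "x \<in> ctree_nodes S"
  have "card (children_of S x) = 0 \<longleftrightarrow> children_of S x = {}"
    using finite_children_of[OF fin] by simp
  then show "x \<in> insert [] (leaves_of S \<union> branching_of S)"
    using x by (auto simp: ctree_nodes_def leaves_of_def branching_of_def)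
qed

lemma finite_ctree_nodes: "finite S \<Longrightarrow> finite (ctree_nodes S)"
  by (rule finite_subset[OF _ finite_prefixes_of]) (auto simp: ctree_nodes_def)

lemma prefixes_of_single_edge:
  assumes root: "children_of S [] = {[a]}" and leaf: "children_of S [a] = {}"
  shows "prefixes_of S \<subseteq> {[], [a]}"
proof
  fix x assume x: "x \<in> prefixes_of S"
  show "x \<in> {[], [a]}"
  proof (cases x)
    case (Cons b y)
    then have "[b] \<in> prefixes_of S" using x prefixes_of_prefix_closed by force
    then have "[b] \<in> children_of S []" by (simp add: children_of_def)
    then have b: "b = a" using root by auto
    have "y = []"
    proof (rule ccontr)
      assume "y \<noteq> []"
      then obtain d z where "x = a # d # z" using Cons b by (cases y) auto
      then have "[a, d] \<in> prefixes_of S" using x prefixes_of_prefix_closed by force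
      then have "[a, d] \<in> children_of S [a]" by (simp add: children_of_def)
      then show False using leaf by simp
    qed
    then show ?thesis using Cons b by simp
  qed simp
qed

lemma card_ctree_nodes_le:
  fixes S :: "'c list set"
  assumes fin: "finite S" and Nil: "[] \<in> S" and letter: "[a] \<in> S"
    and card_S: "card S \<le> n" and n: "3 \<le> n"
  shows "card (ctree_nodes S) \<le> 2 * n - 3"
proof -
  let ?L = "leaves_of S" and ?B = "branching_of S"
  have ne: "S \<noteq> {}" using Nil by auto
  have fin_LB: "finite ?L" "finite ?B"
    using finite_prefixes_of[OF fin] by (auto simp: leaves_of_def branching_of_def)
  have BL: "card ?B < card ?L" using card_branching_of_less_leaves_of[OF fin ne] .
  have a_child: "[a] \<in> children_of S []"
    using letter subset_prefixes_of by (auto simp: children_of_def)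
  then have Nil_not_leaf: "[] \<notin> ?L" by (auto simp: leaves_of_def)
  have "card ?L \<le> card (S - {[]})"
    using leaves_of_subset Nil_not_leaf fin by (intro card_mono) auto
  then have card_L: "card ?L \<le> card S - 1" using Nil fin by simp
  have card_LB: "card (?L \<union> ?B) \<le> card ?L + card ?B" by (rule card_Un_le)
  show ?thesis
  proof (cases "[] \<in> ?B")
    case True
    then have "ctree_nodes S \<subseteq> ?L \<union> ?B" using ctree_nodes_subset[OF fin] by blast
    then have "card (ctree_nodes S) \<le> card (?L \<union> ?B)" using fin_LB by (simp add: card_mono)
    then show ?thesis using BL card_L card_LB card_S by linarith
  next
    case False
    moreover have "card (children_of S []) \<noteq> 0"
      using a_child finite_children_of[OF fin] by auto
    ultimately have "card (children_of S []) = 1"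
      using Nil_in_prefixes_of[OF ne] by (simp add: branching_of_def)
    then have root: "children_of S [] = {[a]}" using a_child by (metis card_1_singletonE singletonD)
    have nodes: "card (ctree_nodes S) \<le> Suc (card ?L + card ?B)"
    proof -
      have "card (ctree_nodes S) \<le> card (insert [] (?L \<union> ?B))"
        by (rule card_mono) (use ctree_nodes_subset[OF fin] fin_LB in simp_all)
      also have "\<dots> \<le> Suc (card (?L \<union> ?B))" by (simp add: card_insert_if fin_LB)
      finally show ?thesis using card_LB by linarith
    qed
    show ?thesis
    proof (cases "[a] \<in> ?L")
      case True
      then have "prefixes_of S \<subseteq> {[], [a]}"
        using prefixes_of_single_edge[OF root] by (simp add: leaves_of_def)
      then have "card (ctree_nodes S) \<le> card {[], [a]}"
        by (intro card_mono) (auto simp: ctree_nodes_def)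
      then show ?thesis using n by simp
    next
      case False
      then have "?L \<subseteq> S - {[], [a]}" using leaves_of_subset Nil_not_leaf by auto
      then have "card ?L \<le> card S - 2"
        using fin Nil letter card_mono[of "S - {[], [a]}" ?L] by (simp add: card_Diff_subset)
      then show ?thesis using nodes BL card_S n by linarith
    qed
  qed
qed

text \<open>An edge is determined by its lower end: two upper ends would be comparable prefixes of it,
  and the shorter one would lie strictly between the longer one and the lower end.\<close>
lemma inj_on_snd_ctree_edges: "inj_on snd (ctree_edges S)"
proof (rule inj_onI)
  fix p q assume p: "p \<in> ctree_edges S" and q: "q \<in> ctree_edges S" and eq: "snd p = snd q"
  obtain x y x' where pq: "p = (x, y)" "q = (x', y)" using eq by (metis prod.collapse)
  have "prefix x y" "prefix x' y"
    using p q pq by (auto simp: ctree_edges_def prefix_order.less_imp_le)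
  then have "prefix x x' \<or> prefix x' x" by (rule prefix_same_cases)
  then have "x = x'"
    using p q pq unfolding ctree_edges_def prefix_order.le_less by blast
  then show "p = q" using pq by simp
qed

lemma card_ctree_edges_less:
  assumes "finite S" "S \<noteq> {}"
  shows "card (ctree_edges S) < card (ctree_nodes S)"
proof -
  have "[] \<in> ctree_nodes S" using Nil_in_prefixes_of[OF assms(2)] by (simp add: ctree_nodes_def)
  then have "card (ctree_nodes S - {[]}) < card (ctree_nodes S)"
    using card_Diff1_less[OF finite_ctree_nodes[OF assms(1)]] by blast
  moreover have "card (ctree_edges S) \<le> card (ctree_nodes S - {[]})"
    using inj_on_snd_ctree_edges finite_ctree_nodes[OF assms(1)]
    by (intro card_inj_on_le) (auto simp: ctree_edges_def)
  ultimately show ?thesis by linarith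
qed

lemma str_b_root: "str_b r par lab r = []"
  by (simp add: str_b_def depth_def)

lemma str_b_child_of_root:
  assumes "u \<noteq> r" "par u = r"
  shows "str_b r par lab u = [lab u]"
proof -
  have "depth r par u = 1" unfolding depth_def
  proof (rule Least_equality)
    fix k assume "(par ^^ k) u = r"
    then show "1 \<le> k" using assms(1) by (cases k) auto
  qed (use assms(2) in simp)
  then show ?thesis by (simp add: str_b_def)
qed

lemma trie_root_has_child:
  assumes trie: "is_trie V r par lab" and v: "v \<in> V" "v \<noteq> r"
  shows "\<exists>u\<in>V. u \<noteq> r \<and> par u = r"
proof -
  obtain k where "(par ^^ k) v = r" using trie v(1) by (auto simp: is_trie_def)
  then show ?thesis using v
  proof (induction k arbitrary: v)
    case (Suc k)
    show ?case
    proof (cases "par v = r")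
      case False
      have "(par ^^ k) (par v) = r" using Suc.prems(1) by (simp add: funpow_Suc_right del: funpow.simps)
      moreover have "par v \<in> V" using trie Suc.prems by (auto simp: is_trie_def)
      ultimately show ?thesis using Suc.IH False by blast
    qed (use Suc.prems in blast)
  qed simp
qed

theorem theorem2:
  fixes V :: "'v set" and r :: 'v and par :: "'v \<Rightarrow> 'v" and lab :: "'v \<Rightarrow> 'c"
  assumes "is_trie V r par lab"
    and "card V \<ge> 3"
  shows "card (ctree_nodes (Suffix_b V r par lab)) \<le> 2 * card V - 3
       \<and> card (ctree_edges (Suffix_b V r par lab)) \<le> 2 * card V - 4"
proof -
  let ?S = "Suffix_b V r par lab"
  have finV: "finite V" and rV: "r \<in> V" using assms(1) by (auto simp: is_trie_def)
  have finS: "finite ?S" and card_S: "card ?S \<le> card V"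
    using finV by (simp_all add: Suffix_b_def card_image_le)
  have Nil: "[] \<in> ?S" unfolding Suffix_b_def using rV str_b_root by (metis image_eqI)
  have "\<not> V \<subseteq> {r}"
  proof
    assume "V \<subseteq> {r}"
    then have "card V \<le> 1" using card_mono[of "{r}" V] by simp
    with assms(2) show False by simp
  qed
  then obtain v where "v \<in> V" "v \<noteq> r" by blast
  then obtain u where u: "u \<in> V" "u \<noteq> r" "par u = r"
    using trie_root_has_child[OF assms(1)] by blast
  then have "[lab u] \<in> ?S"
    unfolding Suffix_b_def using str_b_child_of_root by (metis image_eqI)
  then have "card (ctree_nodes ?S) \<le> 2 * card V - 3"
    using card_ctree_nodes_le[OF finS Nil _ card_S assms(2)] by blast
  moreover have "card (ctree_edges ?S) < card (ctree_nodes ?S)"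
    using card_ctree_edges_less[OF finS] Nil by blast
  ultimately show ?thesis using assms(2) by linarith
qed

end
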